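(* Consider the remote-attestation Stackelberg game described in the context with a single device $\delta$ (so $\mathcal{D}=\{\delta\}$ and the only class is $\mathcal{E}=\{\delta\}$) and a single attestation method $m$. Let $$\tau_\delta=\frac{1}{\mu^m}\cdot\frac{C_A^{\mathcal{E}}+C_A^\delta-G_A^\delta}{L_A^\delta-G_A^\delta}.$$ Then the defender's optimal attestation strategy ${p^*}_\delta^m$ is $${p^*}_\delta^m=\begin{cases}0&\text{if } C_D^m\ge (G_D^\delta-L_D^\delta)\cdot\mu^m \text{ and } \tau_\delta\ge \frac{L_D^\delta}{-C_D^m},\\ \tau_\delta&\text{otherwise.}\end{cases}$$
   Context: Remote-attestation game: there is a finite set $\mathcal{D}$ of devices partitioned into pairwise disjoint device classes, and a finite set $\mathcal{M}$ of attestation methods. Constants: for each method $m$, a detection probability $\mu^m$ and a defender cost $C_D^m$ of running $m$ on a device; for each device $\delta$, an attacker cost $C_A^\delta$ of attacking it; for each class $\mathcal{E}$, an attacker exploit-development cost $C_A^{\mathcal{E}}$; for each device $\delta$, defender gain $G_D^\delta$ and loss $L_D^\delta$, attacker gain $G_A^\delta$ and loss $L_A^\delta$ (losses are negative values), with $G_D^\delta=-L_A^\delta$ and $L_D^\delta=-G_A^\delta$. The defender (leader) chooses $\vec p=\langle p_\delta^m\rangle\in[0,1]^{|\mathcal{D}\times\mathcal{M}|}$ ($p_\delta^m$ = probability of running $m$ on $\delta$); the attacker (follower) chooses $\vec a\in\{0,1\}^{|\mathcal{D}|}$. $P_\delta(\vec p)=1-\prod_{m}(1-\mu^m p_\delta^m)$;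 $C_D^T(\vec p)=\sum_\delta\sum_m C_D^m p_\delta^m$; $U_D(\vec p,\vec a)=\sum_\delta[G_D^\delta P_\delta(\vec p)+L_D^\delta(1-P_\delta(\vec p))]a_\delta-C_D^T(\vec p)$; $C_A^T(\vec a)=\sum_{\mathcal{E}}\big(C_A^{\mathcal{E}}1_{\{\exists\delta\in\mathcal{E}:a_\delta=1\}}+\sum_{\delta\in\mathcal{E}}C_A^\delta a_\delta\big)$; $U_A(\vec p,\vec a)=\sum_\delta[L_A^\delta P_\delta(\vec p)+G_A^\delta(1-P_\delta(\vec p))]a_\delta-C_A^T(\vec a)$. Attacker best response: $\mathcal{F}_A(\vec p)=\operatorname{argmax}_{\vec a}U_A(\vec p,\vec a)$. The defender's optimal strategy is $\vec p^*=\operatorname{argmax}_{\vec p,\ \vec a\in\mathcal{F}_A(\vec p)}U_D(\vec p,\vec a)$ (i.e., ties in the attacker's best response are broken in favor of the defender). *)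

theory Defs
  imports Main "HOL.Real"
begin

text \<open>A defender strategy is p :: 'd => 'm => real (p d m = probability of running m on d),
  an attacker strategy is a :: 'd => bool (a d = attack device d).\<close>

record ('d, 'm) ra_game =
  devs    :: "'d set"
  meths   :: "'m set"
  classes :: "'d set set"
  mu      :: "'m \<Rightarrow> real"
  CD      :: "'m \<Rightarrow> real"
  CAdev   :: "'d \<Rightarrow> real"
  CAcls   :: "'d set \<Rightarrow> real"
  GD      :: "'d \<Rightarrow> real"
  LD      :: "'d \<Rightarrow> real"
  GA      :: "'d \<Rightarrow> real"
  LA      :: "'d \<Rightarrow> real"

definition Pdet :: "('d, 'm) ra_game \<Rightarrow> ('d \<Rightarrow> 'm \<Rightarrow> real) \<Rightarrow> 'd \<Rightarrow> real" where
  "Pdet g p d = 1 - (\<Prod>m\<in>meths g. 1 - mu g m * p d m)"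

definition CDT :: "('d, 'm) ra_game \<Rightarrow> ('d \<Rightarrow> 'm \<Rightarrow> real) \<Rightarrow> real" where
  "CDT g p = (\<Sum>d\<in>devs g. \<Sum>m\<in>meths g. CD g m * p d m)"

definition UD :: "('d, 'm) ra_game \<Rightarrow> ('d \<Rightarrow> 'm \<Rightarrow> real) \<Rightarrow> ('d \<Rightarrow> bool) \<Rightarrow> real" where
  "UD g p a = (\<Sum>d\<in>devs g. (GD g d * Pdet g p d + LD g d * (1 - Pdet g p d)) * of_bool (a d))
              - CDT g p"

definition CAT :: "('d, 'm) ra_game \<Rightarrow> ('d \<Rightarrow> bool) \<Rightarrow> real" where
  "CAT g a = (\<Sum>E\<in>classes g. CAcls g E * of_bool (\<exists>d\<in>E. a d)
                               + (\<Sum>d\<in>E. CAdev g d * of_bool (a d)))"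

definition UA :: "('d, 'm) ra_game \<Rightarrow> ('d \<Rightarrow> 'm \<Rightarrow> real) \<Rightarrow> ('d \<Rightarrow> bool) \<Rightarrow> real" where
  "UA g p a = (\<Sum>d\<in>devs g. (LA g d * Pdet g p d + GA g d * (1 - Pdet g p d)) * of_bool (a d))
              - CAT g a"

definition feasible :: "('d, 'm) ra_game \<Rightarrow> ('d \<Rightarrow> 'm \<Rightarrow> real) \<Rightarrow> bool" where
  "feasible g p \<longleftrightarrow> (\<forall>d\<in>devs g. \<forall>m\<in>meths g. 0 \<le> p d m \<and> p d m \<le> 1)"

definition best_resp :: "('d, 'm) ra_game \<Rightarrow> ('d \<Rightarrow> 'm \<Rightarrow> real) \<Rightarrow> ('d \<Rightarrow> bool) set" where
  "best_resp g p = {a. \<forall>a'. UA g p a' \<le> UA g p a}"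

text \<open>Optimal defender strategies (strong Stackelberg: ties broken in favour of the defender):
  p is feasible and, together with some best response a, attains the maximum of U_D over all
  feasible p' and best responses a' to p'.\<close>
definition optimal_def :: "('d, 'm) ra_game \<Rightarrow> ('d \<Rightarrow> 'm \<Rightarrow> real) \<Rightarrow> bool" where
  "optimal_def g p \<longleftrightarrow> feasible g p \<and>
     (\<exists>a\<in>best_resp g p. \<forall>p' a'. feasible g p' \<and> a' \<in> best_resp g p' \<longrightarrow> UD g p' a' \<le> UD g p a)"

end

theory Submission
  imports Defs
begin

text \<open>With one device and one method, the attacker's net payoff for attacking is an affine,
  strictly decreasing function of the attestation probability \<open>x\<close> that vanishes at \<open>x = \<tau>\<close>:
  the attacker attacks when \<open>x < \<tau>\<close>, refrains when \<open>x > \<tau>\<close>, and is indifferent at \<open>x = \<tau>\<close>.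
  Against an attack the defender's payoff is affine in \<open>x\<close> on \<open>[0, \<tau>]\<close>, so it is at most
  its value \<open>-G\<^sub>A\<close> at \<open>x = 0\<close> or its value \<open>-C\<^sub>A\<^sup>\<E> - C\<^sub>A\<^sup>\<delta> - C\<^sub>D \<tau>\<close> at \<open>x = \<tau>\<close>;
  without an attack (\<open>x \<ge> \<tau>\<close>) it is at most \<open>-C\<^sub>D \<tau>\<close>. Hence the value of the game is
  \<open>max (-G\<^sub>A) (-C\<^sub>D \<tau>)\<close>, attained by \<open>x = 0\<close> (attacked) or by \<open>x = \<tau>\<close> (spared, ties
  being broken for the defender). The first conjunct of the case distinction in the theorem is
  implied by the second one.\<close>

lemma optimal_defI:
  assumes "feasible g p" and "a \<in> best_resp g p"
    and "\<And>p' a'. feasible g p' \<Longrightarrow> a' \<in> best_resp g p' \<Longrightarrow> UD g p' a' \<le> UD g p a"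
  shows "optimal_def g p"
  using assms unfolding optimal_def_def by blast

lemma affine_le_max_endpoints:
  fixes \<alpha> \<beta> x t :: "'a :: linordered_idom"
  assumes "0 \<le> x" and "x \<le> t"
  shows "\<alpha> + \<beta> * x \<le> max \<alpha> (\<alpha> + \<beta> * t)"
proof (cases "0 \<le> \<beta>")
  case True
  then show ?thesis using assms by (simp add: mult_left_mono)
next
  case False
  then show ?thesis using assms by (simp add: mult_nonpos_nonneg)
qed

locale single_device_game =
  fixes g :: "('d, 'm) ra_game" and \<delta> :: 'd and m :: 'm
  assumes devs: "devs g = {\<delta>}" and meths: "meths g = {m}" and classes: "classes g = {{\<delta>}}"
begin

definition attack_margin :: "real \<Rightarrow> real" where
  "attack_margin x = LA g \<delta> * (mu g m * x) + GA g \<delta> * (1 - mu g m * x)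
     - CAcls g {\<delta>} - CAdev g \<delta>"

lemma feasible_iff: "feasible g p \<longleftrightarrow> 0 \<le> p \<delta> m \<and> p \<delta> m \<le> 1"
  by (simp add: feasible_def devs meths)

lemma Pdet_eq: "Pdet g p d = mu g m * p d m"
  by (simp add: Pdet_def meths)

lemma UA_eq: "UA g p a = of_bool (a \<delta>) * attack_margin (p \<delta> m)"
  by (simp add: UA_def CAT_def Pdet_eq attack_margin_def devs classes algebra_simps)

lemma UD_eq:
  "UD g p a = of_bool (a \<delta>) * (GD g \<delta> * (mu g m * p \<delta> m) + LD g \<delta> * (1 - mu g m * p \<delta> m))
     - CD g m * p \<delta> m"
  by (simp add: UD_def CDT_def Pdet_eq devs meths)

lemma best_resp_iff:
  "a \<in> best_resp g p \<longleftrightarrow>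
     (if a \<delta> then 0 \<le> attack_margin (p \<delta> m) else attack_margin (p \<delta> m) \<le> 0)"
proof
  assume "a \<in> best_resp g p"
  then have "UA g p (\<lambda>_. True) \<le> UA g p a" and "UA g p (\<lambda>_. False) \<le> UA g p a"
    by (simp_all add: best_resp_def)
  then show "if a \<delta> then 0 \<le> attack_margin (p \<delta> m) else attack_margin (p \<delta> m) \<le> 0"
    by (cases "a \<delta>") (simp_all add: UA_eq)
next
  assume "if a \<delta> then 0 \<le> attack_margin (p \<delta> m) else attack_margin (p \<delta> m) \<le> 0"
  then show "a \<in> best_resp g p"
    by (auto simp add: best_resp_def UA_eq)
qed

end

locale attestation_game = single_device_game +
  fixes \<tau> :: real
  assumes mu_pos: "0 < mu g m" and CD_pos: "0 < CD g m"
    and CAdev_nonneg: "0 \<le> CAdev g \<delta>" and CAcls_nonneg: "0 \<le> CAcls g {\<delta>}"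
    and LA_neg: "LA g \<delta> < 0" and GA_pos: "0 < GA g \<delta>"
    and GD_eq: "GD g \<delta> = - LA g \<delta>" and LD_eq: "LD g \<delta> = - GA g \<delta>"
    and tau: "\<tau> = (1 / mu g m) * ((CAcls g {\<delta>} + CAdev g \<delta> - GA g \<delta>) / (LA g \<delta> - GA g \<delta>))"
    and tau_nonneg: "0 \<le> \<tau>"
begin

lemma attack_margin_eq: "attack_margin x = mu g m * (GA g \<delta> - LA g \<delta>) * (\<tau> - x)"
  using mu_pos LA_neg GA_pos by (simp add: attack_margin_def tau field_simps)

lemma scaled_tau_eq: "mu g m * (GA g \<delta> - LA g \<delta>) * \<tau> = GA g \<delta> - CAcls g {\<delta>} - CAdev g \<delta>"
  using attack_margin_eq[of 0] by (simp add: attack_margin_def)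

lemma best_resp_iff_threshold:
  "a \<in> best_resp g p \<longleftrightarrow> (if a \<delta> then p \<delta> m \<le> \<tau> else \<tau> \<le> p \<delta> m)"
proof -
  obtain k where "0 < k" and margin: "\<And>x. attack_margin x = k * (\<tau> - x)"
    using attack_margin_eq mu_pos LA_neg GA_pos by (metis diff_gt_0_iff_gt less_trans mult_pos_pos)
  then show ?thesis
    by (simp add: best_resp_iff margin zero_le_mult_iff mult_le_0_iff)
qed

lemma UD_eq_threshold:
  "UD g p a = of_bool (a \<delta>) * (mu g m * (GA g \<delta> - LA g \<delta>) * p \<delta> m - GA g \<delta>) - CD g m * p \<delta> m"
  by (simp add: UD_eq GD_eq LD_eq algebra_simps)

lemma UD_le_value:
  assumes "feasible g p" and "a \<in> best_resp g p"
  shows "UD g p a \<le> max (- GA g \<delta>) (- CD g m * \<tau>)"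
proof (cases "a \<delta>")
  case True
  define \<beta> where "\<beta> = mu g m * (GA g \<delta> - LA g \<delta>) - CD g m"
  have "0 \<le> p \<delta> m" and "p \<delta> m \<le> \<tau>"
    using assms True by (simp_all add: feasible_iff best_resp_iff_threshold)
  then have "- GA g \<delta> + \<beta> * p \<delta> m \<le> max (- GA g \<delta>) (- GA g \<delta> + \<beta> * \<tau>)"
    by (rule affine_le_max_endpoints)
  moreover have "- GA g \<delta> + \<beta> * \<tau> \<le> - CD g m * \<tau>"
    using scaled_tau_eq CAdev_nonneg CAcls_nonneg by (simp add: \<beta>_def algebra_simps)
  ultimately show ?thesis
    using True by (auto simp add: UD_eq_threshold \<beta>_def algebra_simps)
next
  case False
  then have "\<tau> \<le> p \<delta> m"
    using assms by (simp add: best_resp_iff_threshold)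
  then have "CD g m * \<tau> \<le> CD g m * p \<delta> m"
    using CD_pos by (simp add: mult_left_mono)
  then show ?thesis
    using False by (simp add: UD_eq_threshold)
qed

lemma
  shows best_resp_null_strategy: "(\<lambda>_. True) \<in> best_resp g (\<lambda>_ _. 0)"
    and UD_null_strategy: "UD g (\<lambda>_ _. 0) (\<lambda>_. True) = - GA g \<delta>"
  using tau_nonneg by (simp_all add: best_resp_iff_threshold UD_eq_threshold)

lemma
  shows best_resp_threshold_strategy: "(\<lambda>_. False) \<in> best_resp g (\<lambda>_ _. \<tau>)"
    and UD_threshold_strategy: "UD g (\<lambda>_ _. \<tau>) (\<lambda>_. False) = - CD g m * \<tau>"
  by (simp_all add: best_resp_iff_threshold UD_eq_threshold)

lemma null_strategy_condition_iff:
  "CD g m \<ge> (GD g \<delta> - LD g \<delta>) * mu g m \<and> \<tau> \<ge> LD g \<delta> / (- CD g m)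
     \<longleftrightarrow> GA g \<delta> \<le> CD g m * \<tau>"
proof -
  have "\<tau> \<ge> LD g \<delta> / (- CD g m) \<longleftrightarrow> GA g \<delta> \<le> CD g m * \<tau>"
    using CD_pos by (simp add: LD_eq field_simps)
  moreover have "CD g m \<ge> (GD g \<delta> - LD g \<delta>) * mu g m" if "GA g \<delta> \<le> CD g m * \<tau>"
  proof -
    have "\<tau> * (mu g m * (GA g \<delta> - LA g \<delta>)) \<le> \<tau> * CD g m"
      using that scaled_tau_eq CAdev_nonneg CAcls_nonneg by (simp add: mult.commute)
    moreover have "0 < \<tau>"
      using that GA_pos tau_nonneg by (cases "\<tau> = 0") auto
    ultimately show ?thesis
      by (simp add: GD_eq LD_eq mult.commute)
  qed
  ultimately show ?thesis by blast
qed

end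

theorem proposition1:
  fixes g :: "('d, 'm) ra_game" and \<delta> :: 'd and m :: 'm and \<tau> :: real
  assumes "devs g = {\<delta>}" and "meths g = {m}" and "classes g = {{\<delta>}}"
    and "0 < mu g m" and "mu g m \<le> 1"
    and "0 < CD g m" and "0 \<le> CAdev g \<delta>" and "0 \<le> CAcls g {\<delta>}"
    and "LA g \<delta> < 0" and "0 < GA g \<delta>"
    and "GD g \<delta> = - LA g \<delta>" and "LD g \<delta> = - GA g \<delta>"
    and tau: "\<tau> = (1 / mu g m) * ((CAcls g {\<delta>} + CAdev g \<delta> - GA g \<delta>) / (LA g \<delta> - GA g \<delta>))"
    and "0 \<le> \<tau>" and "\<tau> \<le> 1"
  shows "optimal_def g (\<lambda>d k. if CD g m \<ge> (GD g \<delta> - LD g \<delta>) * mu g m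
                                   \<and> \<tau> \<ge> LD g \<delta> / (- CD g m)
                                then 0 else \<tau>)"
proof -
  interpret attestation_game g \<delta> m \<tau>
    using assms by unfold_locales
  show ?thesis
  proof (cases "GA g \<delta> \<le> CD g m * \<tau>")
    case True
    have "optimal_def g (\<lambda>_ _. 0)"
      by (rule optimal_defI[OF _ best_resp_null_strategy])
        (use True UD_le_value in \<open>auto simp: feasible_iff UD_null_strategy\<close>)
    then show ?thesis
      by (simp only: null_strategy_condition_iff True if_True)
  next
    case False
    have "optimal_def g (\<lambda>_ _. \<tau>)"
      by (rule optimal_defI[OF _ best_resp_threshold_strategy])
        (use False UD_le_value assms(14,15) in \<open>auto simp: feasible_iff UD_threshold_strategy\<close>)
    then show ?thesis
      by (simp only: null_strategy_condition_iff False if_False)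
  qed
qed

end
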